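(* Let $X=\{0,1\}^{\mathbb N}$ and define a relation $\alpha$ on $X$ by $x\alpha y \Leftrightarrow \exists_{i,j\in\mathbb N}(i\ne j\wedge x_i\ne y_i\wedge x_j\ne y_j)$. Then for all $x,y\in X$: $(x,y)\in\bigcap\langle\alpha\rangle^*$ if and only if there exists an injective function $f:\mathbb N\to\mathbb N$ such that for all $n\in\mathbb N$, $x_n\neq y_n \Leftrightarrow \exists_{m\in\mathbb N}\, n=f(m)$.
   Context: Constructive (intuitionistic) mathematics. The filled product of relations $\alpha,\beta$ on $X$ is $\alpha*\beta=\{(x,y)\mid \forall_{z\in X}(x\alpha z\vee z\beta y)\}$. $\langle\alpha\rangle^*$ is the smallest set of relations on $X$ containing $\alpha$ and closed under $*$, and $\bigcap\langle\alpha\rangle^*$ is the intersection of all its members. *)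

theory Defs
  imports Main
begin

text \<open>Filled product of relations on a type (the whole type plays the role of X).\<close>
definition filled_prod :: "'a rel \<Rightarrow> 'a rel \<Rightarrow> 'a rel" where
  "filled_prod a b = {(x, y). \<forall>z. (x, z) \<in> a \<or> (z, y) \<in> b}"

inductive_set filled_closure :: "'a rel \<Rightarrow> 'a rel set" for a :: "'a rel" where
  base: "a \<in> filled_closure a"
| prod: "b \<in> filled_closure a \<Longrightarrow> c \<in> filled_closure a \<Longrightarrow> filled_prod b c \<in> filled_closure a"

definition alpha2 :: "(nat \<Rightarrow> bool) rel" where
  "alpha2 = {(x, y). \<exists>i j. i \<noteq> j \<and> x i \<noteq> y i \<and> x j \<noteq> y j}"

end

theory Submission
  imports Defs "HOL-Library.Infinite_Set"
begin

text \<open>Call \<open>x\<close> and \<open>y\<close> \<open>k\<close>-apart if they disagree at infinitely many or at least \<open>k\<close> places.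
  Then \<open>\<alpha>\<close> is the relation of being 2-apart, and the filled product of being \<open>a\<close>-apart and
  being \<open>b\<close>-apart is being \<open>(a + b - 1)\<close>-apart: a point \<open>z\<close> witnessing failure is obtained by
  switching \<open>x\<close> to \<open>y\<close> at \<open>a - 1\<close> of their disagreements, and conversely disagreements are
  subadditive along \<open>x, z, y\<close>. Hence the closure consists exactly of the relations of being
  \<open>k\<close>-apart for \<open>k \<ge> 2\<close>, whose intersection says that \<open>x\<close> and \<open>y\<close> disagree at infinitely many
  places, i.e. on the range of an injective sequence.\<close>

definition disagree :: "('i \<Rightarrow> 'b) \<Rightarrow> ('i \<Rightarrow> 'b) \<Rightarrow> 'i set" where
  "disagree x y = {n. x n \<noteq> y n}"

definition apart :: "nat \<Rightarrow> ('i \<Rightarrow> 'b) rel" where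
  "apart k = {(x, y). infinite (disagree x y) \<or> k \<le> card (disagree x y)}"

lemma disagree_triangle: "disagree x y \<subseteq> disagree x z \<union> disagree z y"
  unfolding disagree_def by auto

lemma two_distinct_iff_infinite_or_card_ge_2:
  "(\<exists>i j. i \<noteq> j \<and> i \<in> D \<and> j \<in> D) \<longleftrightarrow> infinite D \<or> 2 \<le> card D"
proof (cases "finite D")
  case True
  then show ?thesis using card_le_Suc0_iff_eq[OF True] by auto
next
  case False
  then obtain B where "card B = 2" "B \<subseteq> D" using infinite_arbitrarily_large by blast
  then show ?thesis using False by (auto simp: card_2_iff)
qed

lemma alpha2_eq_apart_2: "alpha2 = apart 2"
proof (rule set_eqI, clarify)
  fix x y :: "nat \<Rightarrow> bool"
  show "(x, y) \<in> alpha2 \<longleftrightarrow> (x, y) \<in> apart 2"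
    using two_distinct_iff_infinite_or_card_ge_2[of "disagree x y"]
    unfolding alpha2_def apart_def disagree_def by simp
qed

lemma apart_filled_prod_witness:
  assumes "1 \<le> a" "1 \<le> b" and "(x, y) \<notin> apart (a + b - 1)"
  obtains z where "(x, z) \<notin> apart a" "(z, y) \<notin> apart b"
proof -
  let ?D = "disagree x y"
  have fin: "finite ?D" and card: "card ?D < a + b - 1"
    using assms(3) unfolding apart_def by auto
  obtain S where S: "S \<subseteq> ?D" "card S = min (card ?D) (a - 1)"
    using obtain_subset_with_card_n[of "min (card ?D) (a - 1)" ?D] by auto
  have "finite S" using S(1) fin by (rule finite_subset)
  define z where "z n = (if n \<in> S then y n else x n)" for n
  have "disagree x z = S" using S(1) unfolding z_def disagree_def by auto
  moreover have "disagree z y = ?D - S" unfolding z_def disagree_def by auto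
  moreover have "card (?D - S) = card ?D - card S" using \<open>finite S\<close> S(1) by (rule card_Diff_subset)
  ultimately have "(x, z) \<notin> apart a" "(z, y) \<notin> apart b"
    using S(2) \<open>finite S\<close> fin card assms(1,2) unfolding apart_def by auto
  then show thesis by (rule that)
qed

lemma apart_subadditive:
  assumes "(x, z) \<notin> apart a" "(z, y) \<notin> apart b"
  shows "(x, y) \<notin> apart (a + b - 1)"
proof -
  have fin1: "finite (disagree x z)" "card (disagree x z) < a"
    and fin2: "finite (disagree z y)" "card (disagree z y) < b"
    using assms unfolding apart_def by auto
  let ?U = "disagree x z \<union> disagree z y"
  have "finite ?U" using fin1 fin2 by simp
  then have "finite (disagree x y)" "card (disagree x y) \<le> card ?U"
    by (meson disagree_triangle finite_subset, meson disagree_triangle card_mono)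
  moreover have "card ?U \<le> card (disagree x z) + card (disagree z y)" by (rule card_Un_le)
  ultimately show ?thesis using fin1 fin2 unfolding apart_def by auto
qed

lemma filled_prod_apart:
  assumes "1 \<le> a" "1 \<le> b"
  shows "filled_prod (apart a) (apart b) = (apart (a + b - 1) :: ('i \<Rightarrow> 'b) rel)"
proof (rule set_eqI, clarify)
  fix x y :: "'i \<Rightarrow> 'b"
  show "(x, y) \<in> filled_prod (apart a) (apart b) \<longleftrightarrow> (x, y) \<in> apart (a + b - 1)"
  proof
    assume "(x, y) \<in> filled_prod (apart a) (apart b)"
    then show "(x, y) \<in> apart (a + b - 1)"
      using apart_filled_prod_witness[OF assms] unfolding filled_prod_def by blast
  next
    assume "(x, y) \<in> apart (a + b - 1)"
    then show "(x, y) \<in> filled_prod (apart a) (apart b)"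
      using apart_subadditive unfolding filled_prod_def by blast
  qed
qed

lemma filled_closure_apart_2:
  "filled_closure (apart 2 :: ('i \<Rightarrow> 'b) rel) = range (\<lambda>k. apart (k + 2))"
proof -
  have "r \<in> range (\<lambda>k. apart (k + 2))" if "r \<in> filled_closure (apart 2)" for r :: "('i \<Rightarrow> 'b) rel"
    using that
  proof (induction rule: filled_closure.induct)
    case base
    show ?case by (rule range_eqI[of _ _ 0]) (simp add: numeral_2_eq_2)
  next
    case (prod b c)
    then obtain k l where "b = apart (k + 2)" "c = apart (l + 2)" by auto
    then show ?case by (intro range_eqI[of _ _ "k + l + 1"]) (simp add: filled_prod_apart)
  qed
  moreover have "(apart (k + 2) :: ('i \<Rightarrow> 'b) rel) \<in> filled_closure (apart 2)" for k
  proof (induction k)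
    case 0
    show ?case using filled_closure.base by (simp add: numeral_2_eq_2)
  next
    case (Suc k)
    from filled_closure.prod[OF filled_closure.base Suc] show ?case by (simp add: filled_prod_apart)
  qed
  ultimately show ?thesis by blast
qed

lemma Inter_apart: "(\<Inter>k. apart (k + 2)) = {(x, y). infinite (disagree x y)}"
proof (rule set_eqI, clarify)
  fix x y :: "'i \<Rightarrow> 'b"
  show "(x, y) \<in> (\<Inter>k. apart (k + 2)) \<longleftrightarrow> (x, y) \<in> {(x, y). infinite (disagree x y)}"
  proof
    assume "(x, y) \<in> (\<Inter>k. apart (k + 2))"
    then have "(x, y) \<in> apart (card (disagree x y) + 1 + 2)" by blast
    then show "(x, y) \<in> {(x, y). infinite (disagree x y)}" unfolding apart_def by auto
  qed (auto simp: apart_def)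
qed

lemma infinite_nat_set_iff_inj_range:
  fixes D :: "nat set"
  shows "infinite D \<longleftrightarrow> (\<exists>f :: nat \<Rightarrow> nat. inj f \<and> range f = D)"
  using inj_enumerate range_enumerate range_inj_infinite by metis

theorem mainTheorem2:
  fixes x y :: "nat \<Rightarrow> bool"
  shows "(x, y) \<in> \<Inter> (filled_closure alpha2) \<longleftrightarrow>
    (\<exists>f :: nat \<Rightarrow> nat. inj f \<and> (\<forall>n. x n \<noteq> y n \<longleftrightarrow> (\<exists>m. n = f m)))"
proof -
  have "(x, y) \<in> \<Inter> (filled_closure alpha2) \<longleftrightarrow> infinite (disagree x y)"
    by (simp only: alpha2_eq_apart_2 filled_closure_apart_2 Inter_apart) simp
  also have "\<dots> \<longleftrightarrow> (\<exists>f :: nat \<Rightarrow> nat. inj f \<and> range f = disagree x y)"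
    by (rule infinite_nat_set_iff_inj_range)
  also have "\<dots> \<longleftrightarrow> (\<exists>f :: nat \<Rightarrow> nat. inj f \<and> (\<forall>n. x n \<noteq> y n \<longleftrightarrow> (\<exists>m. n = f m)))"
  proof -
    have "range f = disagree x y \<longleftrightarrow> (\<forall>n. x n \<noteq> y n \<longleftrightarrow> (\<exists>m. n = f m))" for f :: "nat \<Rightarrow> nat"
      unfolding disagree_def by blast
    then show ?thesis by simp
  qed
  finally show ?thesis .
qed

end
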